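(* Let $\rho\colon\mathcal{F}\to[\Lambda]^\omega$ with $\mathcal{F}\subseteq[\Omega]^\omega$ be a partition regular function which has small accretions. Consider the conditions: (1) $\mathrm{FinBW}(\rho)$ coincides with the class of all compact metric spaces in the realm of metric spaces, i.e. a metric space belongs to $\mathrm{FinBW}(\rho)$ if and only if it is compact; (2) $[0,1]\in\mathrm{FinBW}(\rho)$; (3) $\rho_{\mathrm{conv}}\not\leq_K\rho$. Then (1) and (2) are equivalent and imply (3). If moreover $\rho\in P^-$, then (1), (2), (3) are all equivalent.
   Context: All topological spaces are Hausdorff. An ideal on a set $X$: $\mathcal{I}\subseteq\mathcal{P}(X)$ with $\emptyset\in\mathcal{I}$, $X\notin\mathcal{I}$, closed under finite unions and subsets, containing all finite sets; $\mathcal{I}^+=\mathcal{P}(X)\setminus\mathcal{I}$. Partition regular function: $\Lambda,\Omega$ countably infinite, $\mathcal{F}$ a nonempty family of infinite subsets of $\Omega$ with $F\setminus K\in\mathcal{F}$ for $F\in\mathcal{F}$, $K$ finite; $\rho\colon\mathcal{F}\to[\Lambda]^\omega$ is partition regular if (M) $E\subseteq F\Rightarrow\rho(E)\subseteq\rho(F)$; (R) if $F\in\mathcal{F}$ and $\rho(F)=A\cup B$ then some $E\in\mathcal{F}$ has $\rho(E)\subseteq A$ or $\rho(E)\subseteq B$; (S) for every $E\in\mathcal{F}$ there is $F\in\mathcal{F}$, $F\subseteq E$, such that every $a\in\rho(F)$ satisfies $a\notin\rho(F\setminus K)$ for some finite $K\subseteq\Omega$. $\mathcal{I}_\rho=\{A\subseteq\Lambda:\forall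 F\in\mathcal{F}\ \rho(F)\not\subseteq A\}$. For an ideal $\mathcal{I}$ on a countable set $\Lambda$, $\rho_{\mathcal{I}}\colon\mathcal{I}^+\to[\Lambda]^\omega$, $\rho_{\mathcal{I}}(A)=A$ (with $\Omega=\Lambda$). $\rho$ has small accretions: for every $E\in\mathcal{F}$ there is $F\in\mathcal{F}$, $F\subseteq E$, with $\rho(F)\setminus\rho(F\setminus K)\in\mathcal{I}_\rho$ for all finite $K\subseteq\Omega$. $\rho\in P^-$: for every decreasing $A_0\supseteq A_1\supseteq\dots$ of subsets of $\Lambda$ with $A_0\notin\mathcal{I}_\rho$ and $A_n\setminus A_{n+1}\in\mathcal{I}_\rho$, there is $F\in\mathcal{F}$ with $\rho(F)\subseteq A_0$ such that for each $n$ some finite $K\subseteq\Omega$ has $\rho(F\setminus K)\subseteq A_n$. $\rho$-convergence and $\mathrm{FinBW}(\rho)$: $f\restriction\rho(F)$ ($f\colon\Lambda\to X$, $F\in\mathcal{F}$) $\rho$-converges to $x$ if for every neighborhood $U$ of $x$ some finite $K\subseteq\Omega$ has $f[\rho(F\setminus K)]\subseteq U$; $\mathrm{FinBW}(\rho)$ is the class of spaces $X$ such that for every $f\colon\Lambda\to X$ some $F\in\mathcal{F}$ makes $f\restriction\rho(F)$ $\rho$-convergent to a point of $X$. Katětov order: $\rho_2\leq_K\rho_1$ if there is $f\colon\Lambda_1\to\Lambda_2$ such that for every $F_1\in\mathcal{F}_1$ there is $F_2\in\mathcal{F}_2$ such that for every finite $K_1\subseteq\Omega_1$ there is a finite $K_2\subseteq\Omega_2$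 with $\rho_2(F_2\setminus K_2)\subseteq f[\rho_1(F_1\setminus K_1)]$. $\mathrm{conv}$ is the ideal on $\mathbb{Q}\cap[0,1]$ of all sets covered by the ranges of finitely many sequences in $\mathbb{Q}\cap[0,1]$ convergent in $[0,1]$. *)

theory Defs
  imports "HOL-Analysis.Analysis"
begin

definition partition_regular ::
  "'l set \<Rightarrow> 'o set \<Rightarrow> 'o set set \<Rightarrow> ('o set \<Rightarrow> 'l set) \<Rightarrow> bool" where
  "partition_regular \<Lambda> \<Omega> FF \<rho> \<longleftrightarrow>
     countable \<Lambda> \<and> infinite \<Lambda> \<and> countable \<Omega> \<and> infinite \<Omega> \<and>
     FF \<noteq> {} \<and>
     (\<forall>F\<in>FF. F \<subseteq> \<Omega> \<and> infinite F) \<and>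
     (\<forall>F\<in>FF. \<forall>K. finite K \<longrightarrow> F - K \<in> FF) \<and>
     (\<forall>F\<in>FF. \<rho> F \<subseteq> \<Lambda> \<and> infinite (\<rho> F)) \<and>
     (\<forall>E\<in>FF. \<forall>F\<in>FF. E \<subseteq> F \<longrightarrow> \<rho> E \<subseteq> \<rho> F) \<and>
     (\<forall>F\<in>FF. \<forall>A B. \<rho> F = A \<union> B \<longrightarrow> (\<exists>E\<in>FF. \<rho> E \<subseteq> A \<or> \<rho> E \<subseteq> B)) \<and>
     (\<forall>E\<in>FF. \<exists>F\<in>FF. F \<subseteq> E \<and>
        (\<forall>a\<in>\<rho> F. \<exists>K. finite K \<and> K \<subseteq> \<Omega> \<and> a \<notin> \<rho> (F - K)))"

definition ideal_of_prf :: "'l set \<Rightarrow> 'o set set \<Rightarrow> ('o set \<Rightarrow> 'l set) \<Rightarrow> 'l set set" where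
  "ideal_of_prf \<Lambda> FF \<rho> = {A. A \<subseteq> \<Lambda> \<and> (\<forall>F\<in>FF. \<not> \<rho> F \<subseteq> A)}"

definition small_accretions ::
  "'l set \<Rightarrow> 'o set \<Rightarrow> 'o set set \<Rightarrow> ('o set \<Rightarrow> 'l set) \<Rightarrow> bool" where
  "small_accretions \<Lambda> \<Omega> FF \<rho> \<longleftrightarrow>
     (\<forall>E\<in>FF. \<exists>F\<in>FF. F \<subseteq> E \<and>
        (\<forall>K. finite K \<and> K \<subseteq> \<Omega> \<longrightarrow> \<rho> F - \<rho> (F - K) \<in> ideal_of_prf \<Lambda> FF \<rho>))"

definition P_minus ::
  "'l set \<Rightarrow> 'o set \<Rightarrow> 'o set set \<Rightarrow> ('o set \<Rightarrow> 'l set) \<Rightarrow> bool" where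
  "P_minus \<Lambda> \<Omega> FF \<rho> \<longleftrightarrow>
     (\<forall>A :: nat \<Rightarrow> 'l set.
        A 0 \<subseteq> \<Lambda> \<and> (\<forall>n. A (Suc n) \<subseteq> A n) \<and> A 0 \<notin> ideal_of_prf \<Lambda> FF \<rho> \<and>
        (\<forall>n. A n - A (Suc n) \<in> ideal_of_prf \<Lambda> FF \<rho>) \<longrightarrow>
        (\<exists>F\<in>FF. \<rho> F \<subseteq> A 0 \<and>
           (\<forall>n. \<exists>K. finite K \<and> K \<subseteq> \<Omega> \<and> \<rho> (F - K) \<subseteq> A n)))"

definition rho_converges ::
  "'o set \<Rightarrow> ('o set \<Rightarrow> 'l set) \<Rightarrow> 'a topology \<Rightarrow> ('l \<Rightarrow> 'a) \<Rightarrow> 'o set \<Rightarrow> 'a \<Rightarrow> bool" where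
  "rho_converges \<Omega> \<rho> X f F x \<longleftrightarrow>
     (\<forall>U. openin X U \<and> x \<in> U \<longrightarrow>
        (\<exists>K. finite K \<and> K \<subseteq> \<Omega> \<and> f ` \<rho> (F - K) \<subseteq> U))"

definition FinBW ::
  "'l set \<Rightarrow> 'o set \<Rightarrow> 'o set set \<Rightarrow> ('o set \<Rightarrow> 'l set) \<Rightarrow> 'a topology \<Rightarrow> bool" where
  "FinBW \<Lambda> \<Omega> FF \<rho> X \<longleftrightarrow>
     Hausdorff_space X \<and>
     (\<forall>f. f \<in> \<Lambda> \<rightarrow> topspace X \<longrightarrow>
        (\<exists>F\<in>FF. \<exists>x\<in>topspace X. rho_converges \<Omega> \<rho> X f F x))"

definition FinBW_metric_compact ::
  "'l set \<Rightarrow> 'o set \<Rightarrow> 'o set set \<Rightarrow> ('o set \<Rightarrow> 'l set) \<Rightarrow> 'a itself \<Rightarrow> bool" where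
  "FinBW_metric_compact \<Lambda> \<Omega> FF \<rho> _ \<longleftrightarrow>
     (\<forall>m :: 'a metric. FinBW \<Lambda> \<Omega> FF \<rho> (mtopology_of m) \<longleftrightarrow> compact_space (mtopology_of m))"

definition katetov_le ::
  "'l2 set \<Rightarrow> 'o2 set \<Rightarrow> 'o2 set set \<Rightarrow> ('o2 set \<Rightarrow> 'l2 set) \<Rightarrow>
   'l1 set \<Rightarrow> 'o1 set \<Rightarrow> 'o1 set set \<Rightarrow> ('o1 set \<Rightarrow> 'l1 set) \<Rightarrow> bool" where
  "katetov_le \<Lambda>2 \<Omega>2 FF2 \<rho>2 \<Lambda>1 \<Omega>1 FF1 \<rho>1 \<longleftrightarrow>
     (\<exists>f. f \<in> \<Lambda>1 \<rightarrow> \<Lambda>2 \<and>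
        (\<forall>F1\<in>FF1. \<exists>F2\<in>FF2. \<forall>K1. finite K1 \<and> K1 \<subseteq> \<Omega>1 \<longrightarrow>
           (\<exists>K2. finite K2 \<and> K2 \<subseteq> \<Omega>2 \<and> \<rho>2 (F2 - K2) \<subseteq> f ` \<rho>1 (F1 - K1))))"

definition Q01 :: "real set" where
  "Q01 = {q \<in> \<rat>. 0 \<le> q \<and> q \<le> 1}"

definition conv_ideal :: "real set set" where
  "conv_ideal = {A. A \<subseteq> Q01 \<and>
     (\<exists>S :: (nat \<Rightarrow> real) set. finite S \<and>
        (\<forall>s\<in>S. range s \<subseteq> Q01 \<and> (\<exists>x\<in>{0..1}. s \<longlonglongrightarrow> x)) \<and>
        A \<subseteq> \<Union> (range ` S))}"

definition conv_plus :: "real set set" where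
  "conv_plus = Pow Q01 - conv_ideal"

definition rho_conv :: "real set \<Rightarrow> real set" where
  "rho_conv A = A"

end

theory Submission
  imports Defs
begin

(* Condition (1) trivially gives (2), and a metric space in FinBW(rho) is compact: an injective
   map onto an infinite set can only rho-converge to an accumulation point, since rho-images are
   infinite.  Conversely, a single rho-convergent restriction of a map into [0,1] stabilizes
   countably many 2-colorings of Lambda at once, by reading them as the ternary digits of a point
   of the Cantor set.  Applied to membership in the balls of finite 1/n-nets of a compact metric
   space, this makes any map rho-Cauchy, hence rho-convergent.

   If g witnesses rho_conv <=_K rho and g rho-converges on rho(F), the Katetov condition puts a
   set from conv+ into conv, since that set converges to the limit; so (2) implies (3).
   Conversely, let f : Lambda -> [0,1] have no rho-convergent restriction.  Then the
   I_rho-cluster points of f on rho(E) form a nonempty set without isolated points, because P-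
   turns an isolated cluster point into a rho-limit.  Choosing, with small accretions, points of
   g[rho(F - K_n)] (g an injective rational approximation of f) that converge to infinitely many
   distinct cluster points produces sets outside conv, and g witnesses rho_conv <=_K rho. *)

section \<open>Cantor coding\<close>

definition cantor_digit :: "(nat \<Rightarrow> bool) \<Rightarrow> nat \<Rightarrow> real" where
  "cantor_digit b k = (if b k then 2 / 3 ^ Suc k else 0)"

definition cantor_code :: "(nat \<Rightarrow> bool) \<Rightarrow> real" where
  "cantor_code b = (\<Sum>k. cantor_digit b k)"

lemma sums_two_over_power3: "(\<lambda>k. 2 / 3 ^ Suc k :: real) sums 1"
proof -
  have "(\<lambda>k. 2 / 3 * (1 / 3) ^ k :: real) sums (2 / 3 * (1 / (1 - 1 / 3)))"
    by (intro sums_mult geometric_sums) simp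
  then show ?thesis
    by (simp add: power_one_over)
qed

lemma sums_two_over_power3_tail: "(\<lambda>n. 2 / 3 ^ Suc (n + Suc j) :: real) sums (1 / 3 ^ Suc j)"
  using sums_mult[OF sums_two_over_power3, of "1 / 3 ^ Suc j"]
  by (simp add: power_add mult.commute)

lemma cantor_digit_bounds: "0 \<le> cantor_digit b k" "cantor_digit b k \<le> 2 / 3 ^ Suc k"
  unfolding cantor_digit_def by auto

lemma summable_cantor_digit: "summable (cantor_digit b)"
  by (rule summable_comparison_test'[OF sums_summable[OF sums_two_over_power3]])
     (use cantor_digit_bounds in auto)

lemma cantor_code_in_01: "cantor_code b \<in> {0..1}"
proof -
  have "cantor_code b \<le> (\<Sum>k. 2 / 3 ^ Suc k)"
    unfolding cantor_code_def
    by (intro suminf_le summable_cantor_digit sums_summable[OF sums_two_over_power3])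
       (use cantor_digit_bounds in auto)
  moreover have "(\<Sum>k. 2 / 3 ^ Suc k :: real) = 1"
    using sums_unique[OF sums_two_over_power3] by simp
  ultimately show ?thesis
    using suminf_nonneg[OF summable_cantor_digit cantor_digit_bounds(1)]
    by (simp add: cantor_code_def)
qed

lemma cantor_code_split:
  "cantor_code b = (\<Sum>k<j. cantor_digit b k) + cantor_digit b j + (\<Sum>n. cantor_digit b (n + Suc j))"
  and cantor_code_tail_bounds:
  "0 \<le> (\<Sum>n. cantor_digit b (n + Suc j))" "(\<Sum>n. cantor_digit b (n + Suc j)) \<le> 1 / 3 ^ Suc j"
proof -
  have tail: "summable (\<lambda>n. cantor_digit b (n + Suc j))"
    by (rule summable_ignore_initial_segment[OF summable_cantor_digit])
  show "cantor_code b = (\<Sum>k<j. cantor_digit b k) + cantor_digit b j + (\<Sum>n. cantor_digit b (n + Suc j))"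
    unfolding cantor_code_def suminf_split_initial_segment[OF summable_cantor_digit, where k = "Suc j"]
    by simp
  show "0 \<le> (\<Sum>n. cantor_digit b (n + Suc j))"
    by (intro suminf_nonneg tail cantor_digit_bounds)
  have "(\<Sum>n. cantor_digit b (n + Suc j)) \<le> (\<Sum>n. 2 / 3 ^ Suc (n + Suc j))"
    by (intro suminf_le tail sums_summable[OF sums_two_over_power3_tail] cantor_digit_bounds)
  also have "\<dots> = 1 / 3 ^ Suc j"
    by (rule sums_unique[OF sums_two_over_power3_tail, symmetric])
  finally show "(\<Sum>n. cantor_digit b (n + Suc j)) \<le> 1 / 3 ^ Suc j" .
qed

text \<open>Digits 0 and 2 in base 3 leave gaps: codes whose digits first differ at place j are at
  least 1/3^(j+1) apart.\<close>

lemma cantor_code_digit_eq: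
  assumes "\<bar>cantor_code b - cantor_code b'\<bar> < 1 / 3 ^ Suc k"
  shows "b k = b' k"
proof (rule ccontr)
  assume "b k \<noteq> b' k"
  define j where "j = (LEAST j. b j \<noteq> b' j)"
  have "j \<le> k"
    unfolding j_def using \<open>b k \<noteq> b' k\<close> by (rule Least_le)
  have "b j \<noteq> b' j"
    unfolding j_def using \<open>b k \<noteq> b' k\<close> by (rule LeastI)
  have "(\<Sum>k<j. cantor_digit b k) = (\<Sum>k<j. cantor_digit b' k)"
    by (intro sum.cong) (auto simp: cantor_digit_def j_def dest: not_less_Least)
  moreover have "\<bar>cantor_digit b j - cantor_digit b' j\<bar> = 2 / 3 ^ Suc j"
    using \<open>b j \<noteq> b' j\<close> by (auto simp: cantor_digit_def)
  ultimately have "1 / 3 ^ Suc j \<le> \<bar>cantor_code b - cantor_code b'\<bar>"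
    using cantor_code_split[of b j] cantor_code_split[of b' j]
      cantor_code_tail_bounds[of b j] cantor_code_tail_bounds[of b' j]
    by (simp add: abs_le_iff abs_if split: if_splits)
  moreover have "1 / 3 ^ Suc k \<le> (1 / 3 ^ Suc j :: real)"
    using \<open>j \<le> k\<close> by (intro divide_left_mono power_increasing) auto
  ultimately show False
    using assms by linarith
qed

section \<open>Injective rational approximation\<close>

definition odd_dyadic :: "nat \<Rightarrow> real \<Rightarrow> real" where
  "odd_dyadic n x = (2 * \<lfloor>x * (2 ^ n - 1)\<rfloor> + 1) / 2 ^ Suc n"

lemma odd_dyadic_in_Q01:
  assumes "x \<in> {0..1}"
  shows "odd_dyadic n x \<in> Q01"
proof -
  have "0 \<le> x * (2 ^ n - 1)" "x * (2 ^ n - 1) \<le> 2 ^ n - 1"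
    using assms by (auto intro: mult_left_le_one_le)
  then have "0 \<le> \<lfloor>x * (2 ^ n - 1)\<rfloor>" "real_of_int \<lfloor>x * (2 ^ n - 1)\<rfloor> \<le> 2 ^ n - 1"
    by (auto intro: order_trans[OF of_int_floor_le])
  then show ?thesis
    unfolding Q01_def odd_dyadic_def by (auto simp: field_simps)
qed

lemma odd_dyadic_approx:
  assumes "x \<in> {0..1}"
  shows "\<bar>odd_dyadic n x - x\<bar> \<le> 2 / 2 ^ n"
proof -
  let ?m = "real_of_int \<lfloor>x * (2 ^ n - 1)\<rfloor>"
  have "x * (2 ^ n - 1) - 1 < ?m" "?m \<le> x * (2 ^ n - 1)"
    by linarith+
  then have "\<bar>(2 * ?m + 1) - x * 2 ^ Suc n\<bar> \<le> 4"
    using assms by (auto simp: abs_le_iff algebra_simps)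
  then show ?thesis
    by (simp add: odd_dyadic_def abs_le_iff field_simps)
qed

lemma odd_times_power2_eq_imp_eq:
  fixes a b :: int
  assumes "(2 * a + 1) * 2 ^ p = (2 * b + 1) * 2 ^ q"
  shows "p = q"
proof -
  have *: "p \<le> q" if "(2 * a + 1) * 2 ^ p = (2 * b + 1) * (2::int) ^ q" for a b :: int and p q
  proof (rule ccontr)
    assume "\<not> p \<le> q"
    then have "(2::int) ^ p = 2 ^ q * 2 ^ (p - q)"
      by (simp add: power_add[symmetric])
    then have "2 * b + 1 = (2 * a + 1) * 2 ^ (p - q)"
      using that by (simp add: mult.commute mult.left_commute)
    then have "even (2 * b + 1)"
      using \<open>\<not> p \<le> q\<close> by simp
    then show False by simp
  qed
  show ?thesis
    using *[OF assms] *[OF assms[symmetric]] by simp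
qed

lemma odd_dyadic_eq_imp_eq:
  assumes "odd_dyadic n x = odd_dyadic n' x'"
  shows "n = n'"
proof -
  let ?a = "\<lfloor>x * (2 ^ n - 1)\<rfloor>" and ?b = "\<lfloor>x' * (2 ^ n' - 1)\<rfloor>"
  have "real_of_int ((2 * ?a + 1) * 2 ^ Suc n') = real_of_int ((2 * ?b + 1) * 2 ^ Suc n)"
    using assms by (simp add: odd_dyadic_def field_simps)
  then have "Suc n' = Suc n"
    by (intro odd_times_power2_eq_imp_eq) (simp only: of_int_eq_iff)
  then show ?thesis by simp
qed

text \<open>The a-th value is rounded at level a, and the level can be read off the power of 2 in the
  denominator; this is what makes the approximation injective.\<close>

lemma injective_rational_approximation:
  assumes "countable \<Lambda>" and f: "f \<in> \<Lambda> \<rightarrow> {0..1}"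
  obtains g where "g \<in> \<Lambda> \<rightarrow> Q01" "inj_on g \<Lambda>" "\<And>\<delta>. \<delta> > 0 \<Longrightarrow> finite {a \<in> \<Lambda>. \<delta> \<le> \<bar>g a - f a\<bar>}"
proof
  define g where "g a = odd_dyadic (to_nat_on \<Lambda> a) (f a)" for a
  show "g \<in> \<Lambda> \<rightarrow> Q01"
    unfolding g_def using f by (intro funcsetI odd_dyadic_in_Q01) auto
  show "inj_on g \<Lambda>"
    using inj_on_to_nat_on[OF assms(1)] by (auto simp: g_def inj_on_def dest: odd_dyadic_eq_imp_eq)
  fix \<delta> :: real
  assume "\<delta> > 0"
  then obtain N where N: "2 / 2 ^ N < \<delta>"
    using real_arch_pow_inv[of "\<delta> / 2" "1 / 2"] by (auto simp: power_one_over field_simps)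
  have "{a \<in> \<Lambda>. \<delta> \<le> \<bar>g a - f a\<bar>} \<subseteq> to_nat_on \<Lambda> -` {..<N} \<inter> \<Lambda>"
  proof
    fix a assume "a \<in> {a \<in> \<Lambda>. \<delta> \<le> \<bar>g a - f a\<bar>}"
    then have "a \<in> \<Lambda>" "\<delta> \<le> \<bar>g a - f a\<bar>" by auto
    moreover have "\<bar>g a - f a\<bar> \<le> 2 / 2 ^ to_nat_on \<Lambda> a"
      using f \<open>a \<in> \<Lambda>\<close> by (auto simp: g_def intro: odd_dyadic_approx)
    moreover have "N \<le> to_nat_on \<Lambda> a \<Longrightarrow> 2 / 2 ^ to_nat_on \<Lambda> a \<le> (2 / 2 ^ N :: real)"
      by (intro divide_left_mono power_increasing) auto
    ultimately show "a \<in> to_nat_on \<Lambda> -` {..<N} \<inter> \<Lambda>"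
      using N by (cases "N \<le> to_nat_on \<Lambda> a") auto
  qed
  then show "finite {a \<in> \<Lambda>. \<delta> \<le> \<bar>g a - f a\<bar>}"
    by (rule finite_subset) (intro finite_vimage_IntI inj_on_to_nat_on assms(1) finite_lessThan)
qed

section \<open>The ideal conv\<close>

lemma islimpt_UN_finite:
  assumes "finite I"
  shows "x islimpt (\<Union>i\<in>I. A i) \<longleftrightarrow> (\<exists>i\<in>I. x islimpt A i)"
  using assms by (induction I rule: finite_induct) (simp_all add: islimpt_Un islimpt_finite)

lemma Q01_subset: "Q01 \<subseteq> {0..1}"
  by (auto simp: Q01_def)

lemma conv_idealI_convergent:
  assumes A: "A \<subseteq> Q01" and x: "x \<in> {0..1}"
    and near: "\<And>\<epsilon>. \<epsilon> > 0 \<Longrightarrow> finite {q \<in> A. \<epsilon> \<le> dist q x}"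
  shows "A \<in> conv_ideal"
proof (cases "finite A")
  case True
  let ?S = "(\<lambda>q. \<lambda>n::nat. q) ` A"
  have "range (\<lambda>n::nat. q) \<subseteq> Q01 \<and> (\<exists>x\<in>{0..1}. (\<lambda>n::nat. q) \<longlonglongrightarrow> x)" if "q \<in> A" for q
    using that A Q01_subset by (intro conjI bexI[of _ q]) auto
  then have "\<forall>s\<in>?S. range s \<subseteq> Q01 \<and> (\<exists>x\<in>{0..1}. s \<longlonglongrightarrow> x)"
    by blast
  moreover have "A \<subseteq> \<Union> (range ` ?S)"
    by auto
  moreover have "finite ?S"
    using True by simp
  ultimately show ?thesis
    using A unfolding conv_ideal_def by blast
next
  case False
  have "A \<subseteq> \<rat>"
    using A by (auto simp: Q01_def)
  then have "countable A"
    using countable_rat by (rule countable_subset)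
  then have bij: "bij_betw (from_nat_into A) UNIV A"
    using False by (rule bij_betw_from_nat_into)
  have "from_nat_into A \<longlonglongrightarrow> x"
  proof (rule tendstoI)
    fix \<epsilon> :: real
    assume "\<epsilon> > 0"
    have "{n. \<not> dist (from_nat_into A n) x < \<epsilon>} = from_nat_into A -` {q \<in> A. \<epsilon> \<le> dist q x}"
      using bij_betw_apply[OF bij] by (auto simp: not_less)
    also have "finite \<dots>"
      by (rule finite_vimageI[OF near[OF \<open>\<epsilon> > 0\<close>]]) (use bij in \<open>simp add: bij_betw_def\<close>)
    finally show "eventually (\<lambda>n. dist (from_nat_into A n) x < \<epsilon>) sequentially"
      using eventually_cofinite cofinite_eq_sequentially by metis
  qed
  moreover have "range (from_nat_into A) = A"
    using bij by (simp add: bij_betw_def)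
  ultimately show ?thesis
    using A x unfolding conv_ideal_def by (intro CollectI conjI exI[of _ "{from_nat_into A}"]) auto
qed

lemma conv_ideal_finite_limit_points:
  assumes "A \<in> conv_ideal"
  shows "finite {y. y islimpt A}"
proof -
  obtain S where S: "finite S" "\<forall>s\<in>S. range s \<subseteq> Q01 \<and> (\<exists>x\<in>{0..1}. s \<longlonglongrightarrow> x)"
    "A \<subseteq> (\<Union>s\<in>S. range s)"
    using assms unfolding conv_ideal_def by auto
  have "{y. y islimpt A} \<subseteq> lim ` S"
  proof
    fix y assume "y \<in> {y. y islimpt A}"
    then have "y islimpt (\<Union>s\<in>S. range s)"
      using S(3) islimpt_subset by blast
    then obtain s where "s \<in> S" "y islimpt range s"
      using islimpt_UN_finite[OF S(1), of y "\<lambda>s. range s"] by blast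
    moreover obtain x where "s \<longlonglongrightarrow> x"
      using S(2) \<open>s \<in> S\<close> by blast
    ultimately have "y = lim s"
      using sequence_unique_limpt limI by metis
    then show "y \<in> lim ` S"
      using \<open>s \<in> S\<close> by blast
  qed
  then show ?thesis
    using S(1) finite_subset by blast
qed

lemma not_in_conv_ideal_if_approaching:
  fixes b :: "nat \<Rightarrow> nat \<Rightarrow> real"
  assumes "inj y" and "\<And>k j. b k j \<noteq> y k" and "\<And>k j. dist (b k j) (y k) < 1 / Suc j"
  shows "(\<lambda>(k, j). b k j) ` UNIV \<notin> conv_ideal"
proof -
  have "y k islimpt (\<lambda>(k, j). b k j) ` UNIV" for k
    unfolding islimpt_approachable
  proof (intro allI impI)
    fix \<epsilon> :: real
    assume "\<epsilon> > 0"
    then obtain j where "inverse (Suc j) < \<epsilon>"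
      using reals_Archimedean by blast
    then show "\<exists>q\<in>(\<lambda>(k, j). b k j) ` UNIV. q \<noteq> y k \<and> dist q (y k) < \<epsilon>"
      using assms(2,3)[of k j] by (intro bexI[of _ "b k j"]) (auto simp: inverse_eq_divide)
  qed
  then have "range y \<subseteq> {z. z islimpt (\<lambda>(k, j). b k j) ` UNIV}"
    by blast
  then show ?thesis
    using conv_ideal_finite_limit_points range_inj_infinite[OF \<open>inj y\<close>] finite_subset by blast
qed

section \<open>Compact metric spaces\<close>

text \<open>The limit of a subsequence of points lying in longer and longer initial segments of the
  balls is in the closure of each of them.\<close>

lemma compact_space_nested_balls:
  fixes c :: "nat \<Rightarrow> 'a" and r :: "nat \<Rightarrow> real"
  assumes cpt: "compact_space (mtopology_of m)"
    and nested: "\<And>i. \<exists>p. \<forall>n\<le>i. p \<in> mball_of m (c n) (r n)"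
  obtains l where "l \<in> mspace m" "\<And>n. mball_of m (c n) (r n) \<subseteq> mball_of m l (2 * r n)"
proof -
  interpret Metric_space "mspace m" "mdist m"
    by (rule Metric_space_mspace_mdist)
  obtain p where p: "\<And>i n. n \<le> i \<Longrightarrow> p i \<in> mball (c n) (r n)"
    using nested unfolding mball_of_def by metis
  have "p i \<in> mspace m" for i
    using p[of i i] by simp
  then have "range p \<subseteq> mspace m"
    by auto
  then obtain l \<sigma> where l: "l \<in> mspace m" "strict_mono \<sigma>" "limitin mtopology (p \<circ> \<sigma>) l sequentially"
    using cpt unfolding mtopology_of_def compact_space_sequentially by meson
  have close: "mdist m l (c n) \<le> r n" for n
  proof (rule field_le_epsilon)
    fix \<epsilon> :: real
    assume "\<epsilon> > 0"
    then have "\<forall>\<^sub>F i in sequentially. p (\<sigma> i) \<in> mspace m \<and> mdist m (p (\<sigma> i)) l < \<epsilon>"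
      using l(3) by (simp add: limitin_metric comp_def)
    then obtain N where N: "\<And>i. N \<le> i \<Longrightarrow> mdist m (p (\<sigma> i)) l < \<epsilon>"
      unfolding eventually_sequentially by blast
    define i where "i = \<sigma> (max N n)"
    have "n \<le> i"
      using seq_suble[OF l(2), of "max N n"] by (simp add: i_def)
    then have "p i \<in> mball (c n) (r n)"
      by (rule p)
    then show "mdist m l (c n) \<le> r n + \<epsilon>"
      using N[of "max N n"] l(1) triangle[of l "p i" "c n"] by (auto simp: i_def commute)
  qed
  have "mball (c n) (r n) \<subseteq> mball l (2 * r n)" for n
  proof
    fix y assume y: "y \<in> mball (c n) (r n)"
    then have "mdist m l y \<le> mdist m l (c n) + mdist m (c n) y"
      using l(1) by (intro triangle) auto
    then show "y \<in> mball l (2 * r n)"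
      using y l(1) close[of n] by auto
  qed
  then show ?thesis
    using l(1) that unfolding mball_of_def by blast
qed

lemma compact_space_finite_nets:
  assumes "compact_space (mtopology_of m)"
  obtains cs :: "nat \<Rightarrow> 'a list" where "\<And>n. mspace m \<subseteq> (\<Union>c\<in>set (cs n). mball_of m c (1 / Suc n))"
proof -
  interpret Metric_space "mspace m" "mdist m"
    by (rule Metric_space_mspace_mdist)
  have "mtotally_bounded (mspace m)"
    using assms unfolding mtopology_of_def compact_space_eq_mcomplete_mtotally_bounded by blast
  then have "\<exists>C. finite C \<and> mspace m \<subseteq> (\<Union>c\<in>C. mball c (1 / Suc n))" for n
    unfolding mtotally_bounded_def by (meson of_nat_0_less_iff zero_less_Suc divide_pos_pos zero_less_one)
  then have "\<exists>cs. mspace m \<subseteq> (\<Union>c\<in>set cs. mball_of m c (1 / Suc n))" for n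
    unfolding mball_of_def by (metis finite_list)
  then show ?thesis
    using that by metis
qed

lemma countable_finite_exhaustion:
  assumes "countable \<Omega>"
  obtains L :: "nat \<Rightarrow> 'o set" where "\<And>n. finite (L n)" "\<And>n. L n \<subseteq> \<Omega>" "mono L"
    "\<And>K. finite K \<Longrightarrow> K \<subseteq> \<Omega> \<Longrightarrow> \<exists>n. K \<subseteq> L n"
proof -
  define L where "L n = to_nat_on \<Omega> -` {..<n} \<inter> \<Omega>" for n
  have "finite (L n)" for n
    unfolding L_def by (intro finite_vimage_IntI inj_on_to_nat_on assms finite_lessThan)
  moreover have "mono L"
    by (auto simp: mono_def L_def)
  moreover have "\<exists>n. K \<subseteq> L n" if "finite K" "K \<subseteq> \<Omega>" for K
  proof -
    obtain n where "to_nat_on \<Omega> ` K \<subseteq> {..<n}"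
      using finite_nat_bounded[OF finite_imageI[OF \<open>finite K\<close>]] by blast
    then show ?thesis
      using \<open>K \<subseteq> \<Omega>\<close> by (auto simp: L_def)
  qed
  ultimately show ?thesis
    using that[of L] by (auto simp: L_def)
qed

lemma rho_converges_mtopology_of_iff:
  assumes "y \<in> mspace m"
  shows "rho_converges \<Omega> \<rho> (mtopology_of m) f F y \<longleftrightarrow>
    (\<forall>\<epsilon>>0. \<exists>K. finite K \<and> K \<subseteq> \<Omega> \<and> f ` \<rho> (F - K) \<subseteq> mball_of m y \<epsilon>)"
proof -
  interpret Metric_space "mspace m" "mdist m"
    by (rule Metric_space_mspace_mdist)
  have "(\<exists>K. finite K \<and> K \<subseteq> \<Omega> \<and> f ` \<rho> (F - K) \<subseteq> U)"
    if U: "openin mtopology U" "y \<in> U"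
      and balls: "\<forall>\<epsilon>>0. \<exists>K. finite K \<and> K \<subseteq> \<Omega> \<and> f ` \<rho> (F - K) \<subseteq> mball y \<epsilon>" for U
  proof -
    obtain r where "r > 0" "mball y r \<subseteq> U"
      using U openin_mtopology by meson
    moreover obtain K where "finite K" "K \<subseteq> \<Omega>" "f ` \<rho> (F - K) \<subseteq> mball y r"
      using balls \<open>r > 0\<close> by meson
    ultimately show ?thesis
      by (meson order_trans)
  qed
  then show ?thesis
    unfolding rho_converges_def mtopology_of_def mball_of_def
    using assms by (meson centre_in_mball_iff openin_mball)
qed

lemma rho_converges_top_of_set_iff:
  assumes "y \<in> S"
  shows "rho_converges \<Omega> \<rho> (top_of_set S) f F y \<longleftrightarrow>
    (\<forall>\<epsilon>>0. \<exists>K. finite K \<and> K \<subseteq> \<Omega> \<and> f ` \<rho> (F - K) \<subseteq> S \<inter> ball y \<epsilon>)"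
proof -
  have "(\<exists>K. finite K \<and> K \<subseteq> \<Omega> \<and> f ` \<rho> (F - K) \<subseteq> U)"
    if U: "openin (top_of_set S) U" "y \<in> U"
      and balls: "\<forall>\<epsilon>>0. \<exists>K. finite K \<and> K \<subseteq> \<Omega> \<and> f ` \<rho> (F - K) \<subseteq> S \<inter> ball y \<epsilon>" for U
  proof -
    obtain \<epsilon> where "\<epsilon> > 0" "S \<inter> ball y \<epsilon> \<subseteq> U"
      using U openin_contains_ball by (metis Int_commute)
    moreover obtain K where "finite K" "K \<subseteq> \<Omega>" "f ` \<rho> (F - K) \<subseteq> S \<inter> ball y \<epsilon>"
      using balls \<open>\<epsilon> > 0\<close> by meson
    ultimately show ?thesis
      by (meson order_trans)
  qed
  moreover have "openin (top_of_set S) (S \<inter> ball y \<epsilon>)" for \<epsilon>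
    by (simp add: openin_open_Int)
  ultimately show ?thesis
    unfolding rho_converges_def using assms by (meson centre_in_ball IntI)
qed

section \<open>Partition regular functions and FinBW\<close>

locale partition_regular_fun =
  fixes \<Lambda> :: "'l set" and \<Omega> :: "'o set" and FF :: "'o set set" and \<rho> :: "'o set \<Rightarrow> 'l set"
  assumes partition_regular: "partition_regular \<Lambda> \<Omega> FF \<rho>"
begin

abbreviation I :: "'l set set" where
  "I \<equiv> ideal_of_prf \<Lambda> FF \<rho>"

lemma countable_Lambda: "countable \<Lambda>"
  and countable_Omega: "countable \<Omega>"
  and FF_Diff_finite: "F \<in> FF \<Longrightarrow> finite K \<Longrightarrow> F - K \<in> FF"
  and rho_subset: "F \<in> FF \<Longrightarrow> \<rho> F \<subseteq> \<Lambda>"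
  and rho_infinite: "F \<in> FF \<Longrightarrow> infinite (\<rho> F)"
  and rho_mono: "E \<in> FF \<Longrightarrow> F \<in> FF \<Longrightarrow> E \<subseteq> F \<Longrightarrow> \<rho> E \<subseteq> \<rho> F"
  using partition_regular unfolding partition_regular_def by auto

lemma rho_partition: "F \<in> FF \<Longrightarrow> \<rho> F = A \<union> B \<Longrightarrow> \<exists>E\<in>FF. \<rho> E \<subseteq> A \<or> \<rho> E \<subseteq> B"
  using partition_regular unfolding partition_regular_def by blast

lemma rho_Diff_mono:
  assumes "E \<in> FF" "F \<in> FF" "E \<subseteq> F" "finite K'" "K \<subseteq> K'"
  shows "\<rho> (E - K') \<subseteq> \<rho> (F - K)"
  using assms by (intro rho_mono FF_Diff_finite) (auto intro: finite_subset)

lemma rho_Diff_subset: "F \<in> FF \<Longrightarrow> finite K \<Longrightarrow> \<rho> (F - K) \<subseteq> \<Lambda>"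
  using rho_subset FF_Diff_finite by blast

lemma rho_Diff_nonempty: "F \<in> FF \<Longrightarrow> finite K \<Longrightarrow> \<rho> (F - K) \<noteq> {}"
  using rho_infinite[OF FF_Diff_finite] by fastforce

lemma not_in_I: "F \<in> FF \<Longrightarrow> \<rho> F \<subseteq> A \<Longrightarrow> A \<notin> I"
  unfolding ideal_of_prf_def by blast

lemma I_mono: "A \<in> I \<Longrightarrow> B \<subseteq> A \<Longrightarrow> B \<in> I"
  unfolding ideal_of_prf_def by blast

lemma I_finite: "finite A \<Longrightarrow> A \<subseteq> \<Lambda> \<Longrightarrow> A \<in> I"
  unfolding ideal_of_prf_def using rho_infinite finite_subset by blast

lemma I_Un:
  assumes "A \<in> I" "B \<in> I"
  shows "A \<union> B \<in> I"
proof (rule ccontr)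
  assume "A \<union> B \<notin> I"
  with assms obtain F where F: "F \<in> FF" "\<rho> F \<subseteq> A \<union> B"
    unfolding ideal_of_prf_def by auto
  then have "\<rho> F = (\<rho> F \<inter> A) \<union> (\<rho> F \<inter> B)"
    by auto
  then obtain E where "E \<in> FF" "\<rho> E \<subseteq> \<rho> F \<inter> A \<or> \<rho> E \<subseteq> \<rho> F \<inter> B"
    using rho_partition[OF F(1)] by blast
  then show False
    using assms not_in_I by blast
qed

lemma I_UN_finite: "finite S \<Longrightarrow> (\<And>i. i \<in> S \<Longrightarrow> A i \<in> I) \<Longrightarrow> (\<Union>i\<in>S. A i) \<in> I"
  by (induction S rule: finite_induct) (auto intro: I_Un I_finite)

lemma FinBW_imp_compact_space:
  assumes "FinBW \<Lambda> \<Omega> FF \<rho> (mtopology_of m)"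
  shows "compact_space (mtopology_of m)"
proof -
  interpret Metric_space "mspace m" "mdist m"
    by (rule Metric_space_mspace_mdist)
  have "mtopology derived_set_of S \<noteq> {}" if S: "S \<subseteq> mspace m" "infinite S" for S
  proof
    assume no_acc: "mtopology derived_set_of S = {}"
    obtain h :: "nat \<Rightarrow> 'a" where h: "inj h" "range h \<subseteq> S"
      using infinite_countable_subset S(2) by blast
    define f where "f = h \<circ> to_nat_on \<Lambda>"
    have "inj_on f \<Lambda>"
      unfolding f_def using inj_on_to_nat_on[OF countable_Lambda] h(1)
      by (auto intro: comp_inj_on inj_on_subset)
    have f_S: "f a \<in> S" for a
      using h(2) unfolding f_def by auto
    then have "f \<in> \<Lambda> \<rightarrow> topspace (mtopology_of m)"
      using S(1) by auto
    then obtain F x where F: "F \<in> FF" "x \<in> mspace m" "rho_converges \<Omega> \<rho> (mtopology_of m) f F x"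
      using assms unfolding FinBW_def by auto
    obtain T where T: "openin mtopology T" "x \<in> T" "\<And>y. y \<in> S \<Longrightarrow> y \<in> T \<Longrightarrow> y = x"
      using no_acc F(2) unfolding derived_set_of_def by (auto, meson)
    then obtain K where K: "finite K" "f ` \<rho> (F - K) \<subseteq> T"
      using F(3) unfolding rho_converges_def mtopology_of_def by auto
    have "\<rho> (F - K) \<subseteq> f -` {x} \<inter> \<Lambda>"
      using K(2) f_S T(3) rho_Diff_subset[OF F(1) K(1)] by auto
    moreover have "finite (f -` {x} \<inter> \<Lambda>)"
      using \<open>inj_on f \<Lambda>\<close> by (intro finite_vimage_IntI) auto
    ultimately show False
      using rho_infinite[OF FF_Diff_finite[OF F(1) K(1)]] finite_subset by blast
  qed
  then show ?thesis
    unfolding mtopology_of_def compact_space_eq_Bolzano_Weierstrass by blast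
qed

lemma FinBW_01_stabilizes_colorings:
  fixes c :: "'i::countable \<Rightarrow> 'l \<Rightarrow> bool"
  assumes "FinBW \<Lambda> \<Omega> FF \<rho> (top_of_set {0..1::real})"
  obtains F where "F \<in> FF"
    "\<And>i. \<exists>K. finite K \<and> K \<subseteq> \<Omega> \<and> (\<forall>a\<in>\<rho> (F - K). \<forall>a'\<in>\<rho> (F - K). c i a = c i a')"
proof -
  define h where "h a = cantor_code (\<lambda>k. c (from_nat k) a)" for a
  have "h \<in> \<Lambda> \<rightarrow> topspace (top_of_set {0..1})"
    using cantor_code_in_01 by (auto simp: h_def)
  then obtain F x where F: "F \<in> FF" "x \<in> {0..1}" "rho_converges \<Omega> \<rho> (top_of_set {0..1}) h F x"
    using assms unfolding FinBW_def by auto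
  have "\<exists>K. finite K \<and> K \<subseteq> \<Omega> \<and> (\<forall>a\<in>\<rho> (F - K). \<forall>a'\<in>\<rho> (F - K). c i a = c i a')" for i
  proof -
    define e :: real where "e = 1 / (2 * 3 ^ Suc (to_nat i))"
    have "e > 0"
      by (simp add: e_def)
    then obtain K where K: "finite K" "K \<subseteq> \<Omega>" "h ` \<rho> (F - K) \<subseteq> {0..1} \<inter> ball x e"
      using F(3) rho_converges_top_of_set_iff[OF F(2)] by meson
    have "c i a = c i a'" if "a \<in> \<rho> (F - K)" "a' \<in> \<rho> (F - K)" for a a'
    proof -
      have "dist x (h a) < e" "dist x (h a') < e"
        using K(3) that by auto
      then have "\<bar>h a - h a'\<bar> < 1 / 3 ^ Suc (to_nat i)"
        by (simp add: e_def dist_real_def)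
      then have "c (from_nat (to_nat i)) a = c (from_nat (to_nat i)) a'"
        unfolding h_def by (rule cantor_code_digit_eq)
      then show ?thesis
        by simp
    qed
    then show ?thesis
      using K(1,2) by blast
  qed
  then show ?thesis
    using F(1) that by blast
qed

lemma compact_space_rho_Cauchy_converges:
  assumes cpt: "compact_space (mtopology_of m)" and F: "F \<in> FF"
    and Cauchy: "\<And>n. \<exists>K c. finite K \<and> K \<subseteq> \<Omega> \<and> f ` \<rho> (F - K) \<subseteq> mball_of m c (1 / Suc n)"
  obtains l where "l \<in> mspace m" "rho_converges \<Omega> \<rho> (mtopology_of m) f F l"
proof -
  obtain K c where K: "\<And>n. finite (K n)" "\<And>n. K n \<subseteq> \<Omega>"
    "\<And>n. f ` \<rho> (F - K n) \<subseteq> mball_of m (c n) (1 / Suc n)"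
    using Cauchy by metis
  have nested: "\<exists>p. \<forall>n\<le>i. p \<in> mball_of m (c n) (1 / Suc n)" for i
  proof -
    define L where "L = (\<Union>n\<le>i. K n)"
    have "finite L"
      using K(1) by (simp add: L_def)
    then obtain a where "a \<in> \<rho> (F - L)"
      using rho_Diff_nonempty[OF F] by blast
    moreover have "\<rho> (F - L) \<subseteq> \<rho> (F - K n)" if "n \<le> i" for n
      using that \<open>finite L\<close> by (intro rho_Diff_mono F subset_refl) (auto simp: L_def)
    ultimately show ?thesis
      using K(3) by (intro exI[of _ "f a"] allI impI) (meson imageI subsetD)
  qed
  then obtain l where l: "l \<in> mspace m" "\<And>n. mball_of m (c n) (1 / Suc n) \<subseteq> mball_of m l (2 * (1 / Suc n))"
    using compact_space_nested_balls[OF cpt nested] by blast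
  have "rho_converges \<Omega> \<rho> (mtopology_of m) f F l"
    unfolding rho_converges_mtopology_of_iff[OF l(1)]
  proof (intro allI impI)
    fix \<epsilon> :: real
    assume "\<epsilon> > 0"
    then obtain n where "inverse (Suc n) < \<epsilon> / 2"
      using reals_Archimedean[of "\<epsilon> / 2"] by auto
    then have "mball_of m l (2 * (1 / Suc n)) \<subseteq> mball_of m l \<epsilon>"
      unfolding mball_of_def
      by (intro Metric_space.mball_subset_concentric Metric_space_mspace_mdist) (simp add: field_simps)
    then show "\<exists>K. finite K \<and> K \<subseteq> \<Omega> \<and> f ` \<rho> (F - K) \<subseteq> mball_of m l \<epsilon>"
      using K l(2) by (meson order_trans)
  qed
  then show ?thesis
    using l(1) that by blast
qed

lemma rho_image_in_ball_if_net_stable: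
  assumes F: "F \<in> FF" and f: "f \<in> \<Lambda> \<rightarrow> mspace m"
    and net: "mspace m \<subseteq> (\<Union>c\<in>set cs. mball_of m c r)"
    and stable: "\<And>i. i < length cs \<Longrightarrow> \<exists>K. finite K \<and> K \<subseteq> \<Omega> \<and>
      (\<forall>a\<in>\<rho> (F - K). \<forall>a'\<in>\<rho> (F - K). f a \<in> mball_of m (cs ! i) r \<longleftrightarrow> f a' \<in> mball_of m (cs ! i) r)"
  shows "\<exists>K c. finite K \<and> K \<subseteq> \<Omega> \<and> f ` \<rho> (F - K) \<subseteq> mball_of m c r"
proof -
  obtain K where K: "\<And>i. i < length cs \<Longrightarrow> finite (K i)" "\<And>i. i < length cs \<Longrightarrow> K i \<subseteq> \<Omega>"
    "\<And>i a a'. i < length cs \<Longrightarrow> a \<in> \<rho> (F - K i) \<Longrightarrow> a' \<in> \<rho> (F - K i) \<Longrightarrow>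
      f a \<in> mball_of m (cs ! i) r \<longleftrightarrow> f a' \<in> mball_of m (cs ! i) r"
    using stable by metis
  define K' where "K' = (\<Union>i<length cs. K i)"
  have K': "finite K'" "K' \<subseteq> \<Omega>"
    using K(1,2) by (auto simp: K'_def)
  obtain a0 where a0: "a0 \<in> \<rho> (F - K')"
    using rho_Diff_nonempty[OF F K'(1)] by blast
  then have "f a0 \<in> mspace m"
    using f rho_Diff_subset[OF F K'(1)] by auto
  then obtain c where "c \<in> set cs" "f a0 \<in> mball_of m c r"
    using net by (meson UN_E subsetD)
  then obtain i where i: "i < length cs" "f a0 \<in> mball_of m (cs ! i) r"
    by (metis in_set_conv_nth)
  have "f a \<in> mball_of m (cs ! i) r" if "a \<in> \<rho> (F - K')" for a
  proof -
    have "K i \<subseteq> K'"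
      using i(1) by (auto simp: K'_def)
    then show ?thesis
      using K(3)[OF i(1)] i(2) that a0 rho_Diff_mono[OF F F subset_refl K'(1)] by blast
  qed
  then show ?thesis
    using K' by blast
qed

lemma FinBW_if_compact_space:
  assumes FinBW_01: "FinBW \<Lambda> \<Omega> FF \<rho> (top_of_set {0..1::real})"
    and cpt: "compact_space (mtopology_of m)"
  shows "FinBW \<Lambda> \<Omega> FF \<rho> (mtopology_of m)"
  unfolding FinBW_def
proof (intro conjI allI impI)
  show "Hausdorff_space (mtopology_of m)"
    by (simp add: mtopology_of_def Metric_space.Hausdorff_space_mtopology)
  fix f assume "f \<in> \<Lambda> \<rightarrow> topspace (mtopology_of m)"
  then have f: "f \<in> \<Lambda> \<rightarrow> mspace m"
    by simp
  obtain cs where cs: "\<And>n. mspace m \<subseteq> (\<Union>c\<in>set (cs n). mball_of m c (1 / Suc n))"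
    using compact_space_finite_nets[OF cpt] by metis
  define color :: "nat \<times> nat \<Rightarrow> 'l \<Rightarrow> bool"
    where "color = (\<lambda>(n, i) a. f a \<in> mball_of m (cs n ! i) (1 / Suc n))"
  obtain F where F: "F \<in> FF" and stable:
    "\<And>ni. \<exists>K. finite K \<and> K \<subseteq> \<Omega> \<and> (\<forall>a\<in>\<rho> (F - K). \<forall>a'\<in>\<rho> (F - K). color ni a = color ni a')"
    using FinBW_01_stabilizes_colorings[OF FinBW_01, of color] by blast
  have "\<exists>K c. finite K \<and> K \<subseteq> \<Omega> \<and> f ` \<rho> (F - K) \<subseteq> mball_of m c (1 / Suc n)" for n
    using stable[of "(n, _)"] by (intro rho_image_in_ball_if_net_stable[OF F f cs]) (simp add: color_def)
  then obtain l where "l \<in> mspace m" "rho_converges \<Omega> \<rho> (mtopology_of m) f F l"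
    using compact_space_rho_Cauchy_converges[OF cpt F] by blast
  then show "\<exists>F\<in>FF. \<exists>x\<in>topspace (mtopology_of m). rho_converges \<Omega> \<rho> (mtopology_of m) f F x"
    using F by auto
qed

lemma FinBW_01_imp_not_katetov_conv:
  assumes "FinBW \<Lambda> \<Omega> FF \<rho> (top_of_set {0..1::real})"
  shows "\<not> katetov_le Q01 Q01 conv_plus rho_conv \<Lambda> \<Omega> FF \<rho>"
proof
  assume "katetov_le Q01 Q01 conv_plus rho_conv \<Lambda> \<Omega> FF \<rho>"
  then obtain g where g: "g \<in> \<Lambda> \<rightarrow> Q01" and kat: "\<forall>F1\<in>FF. \<exists>F2\<in>conv_plus. \<forall>K1. finite K1 \<and> K1 \<subseteq> \<Omega> \<longrightarrow>
      (\<exists>K2. finite K2 \<and> K2 \<subseteq> Q01 \<and> rho_conv (F2 - K2) \<subseteq> g ` \<rho> (F1 - K1))"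
    unfolding katetov_le_def by blast
  have "g \<in> \<Lambda> \<rightarrow> topspace (top_of_set {0..1})"
    using g Q01_subset by auto
  then obtain F x where F: "F \<in> FF" "x \<in> {0..1}" "rho_converges \<Omega> \<rho> (top_of_set {0..1}) g F x"
    using assms unfolding FinBW_def by auto
  obtain B where B: "B \<in> conv_plus" and B_sub: "\<forall>K1. finite K1 \<and> K1 \<subseteq> \<Omega> \<longrightarrow>
      (\<exists>K2. finite K2 \<and> K2 \<subseteq> Q01 \<and> B - K2 \<subseteq> g ` \<rho> (F - K1))"
    using kat F(1) unfolding rho_conv_def by blast
  have "B \<in> conv_ideal"
  proof (rule conv_idealI_convergent)
    show "B \<subseteq> Q01"
      using B by (simp add: conv_plus_def)
    show "x \<in> {0..1}"
      by (fact F(2))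
    fix \<epsilon> :: real
    assume "\<epsilon> > 0"
    then obtain K where K: "finite K" "K \<subseteq> \<Omega>" "g ` \<rho> (F - K) \<subseteq> {0..1} \<inter> ball x \<epsilon>"
      using F(3) rho_converges_top_of_set_iff[OF F(2)] by meson
    then obtain K2 where "finite K2" "B - K2 \<subseteq> g ` \<rho> (F - K)"
      using B_sub by meson
    then have "{q \<in> B. \<epsilon> \<le> dist q x} \<subseteq> K2"
      using K(3) by (force simp: dist_commute)
    then show "finite {q \<in> B. \<epsilon> \<le> dist q x}"
      using \<open>finite K2\<close> by (rule finite_subset)
  qed
  then show False
    using B by (simp add: conv_plus_def)
qed

end

section \<open>Cluster points and the Katetov order\<close>

locale prf_map_01 = partition_regular_fun \<Lambda> \<Omega> FF \<rho>
  for \<Lambda> :: "'l set" and \<Omega> :: "'o set" and FF :: "'o set set" and \<rho> :: "'o set \<Rightarrow> 'l set" +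
  fixes f :: "'l \<Rightarrow> real"
  assumes f_01: "f \<in> \<Lambda> \<rightarrow> {0..1}"
begin

definition rho_cluster_points :: "'o set \<Rightarrow> real set" where
  "rho_cluster_points E = {y \<in> {0..1}. \<forall>\<epsilon>>0. {a \<in> \<rho> E. dist (f a) y < \<epsilon>} \<notin> I}"

lemma rho_cluster_pointsD:
  assumes "y \<in> rho_cluster_points E" "\<epsilon> > 0"
  shows "{a \<in> \<rho> E. dist (f a) y < \<epsilon>} \<notin> I"
  using assms unfolding rho_cluster_points_def by blast

lemma rho_cluster_points_subset: "rho_cluster_points E \<subseteq> {0..1}"
  unfolding rho_cluster_points_def by blast

lemma f_in_01: "E \<in> FF \<Longrightarrow> a \<in> \<rho> E \<Longrightarrow> f a \<in> {0..1}"
  using f_01 rho_subset by blast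

lemma preimage_in_I_if_no_cluster_points:
  assumes E: "E \<in> FF" and C: "compact C" "C \<subseteq> {0..1}" "C \<inter> rho_cluster_points E = {}"
  shows "{a \<in> \<rho> E. f a \<in> C} \<in> I"
proof -
  have "\<exists>\<epsilon>>0. {a \<in> \<rho> E. dist (f a) y < \<epsilon>} \<in> I" if "y \<in> C" for y
    using C(2,3) that unfolding rho_cluster_points_def by blast
  then obtain \<epsilon> where \<epsilon>: "\<And>y. y \<in> C \<Longrightarrow> \<epsilon> y > 0"
    "\<And>y. y \<in> C \<Longrightarrow> {a \<in> \<rho> E. dist (f a) y < \<epsilon> y} \<in> I"
    by metis
  obtain D where D: "D \<subseteq> C" "finite D" "C \<subseteq> (\<Union>y\<in>D. ball y (\<epsilon> y))"
    using compactE_image[OF C(1), of C "\<lambda>y. ball y (\<epsilon> y)"] \<epsilon>(1) by force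
  have "{a \<in> \<rho> E. f a \<in> C} \<subseteq> (\<Union>y\<in>D. {a \<in> \<rho> E. dist (f a) y < \<epsilon> y})"
    using D(3) by (force simp: dist_commute)
  moreover have "(\<Union>y\<in>D. {a \<in> \<rho> E. dist (f a) y < \<epsilon> y}) \<in> I"
    using D(1,2) \<epsilon>(2) by (intro I_UN_finite) auto
  ultimately show ?thesis
    by (rule I_mono[rotated])
qed

lemma rho_cluster_points_nonempty:
  assumes E: "E \<in> FF"
  shows "rho_cluster_points E \<noteq> {}"
proof
  assume "rho_cluster_points E = {}"
  then have "{a \<in> \<rho> E. f a \<in> {0..1}} \<in> I"
    by (intro preimage_in_I_if_no_cluster_points[OF E]) auto
  moreover have "{a \<in> \<rho> E. f a \<in> {0..1}} = \<rho> E"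
    using f_in_01[OF E] by auto
  ultimately show False
    using not_in_I[OF E] by auto
qed

lemma ball_preimage_Diff_in_I:
  assumes E: "E \<in> FF" and isolated: "rho_cluster_points E \<inter> ball y r \<subseteq> {y}"
    and "0 < s" "t < r"
  shows "{a \<in> \<rho> E. dist (f a) y < t} - {a \<in> \<rho> E. dist (f a) y < s} \<in> I"
proof -
  define C where "C = {0..1} \<inter> (cball y t - ball y s)"
  have "compact C"
    unfolding C_def by (intro compact_Int compact_Icc compact_diff compact_cball open_ball)
  moreover have "C \<inter> rho_cluster_points E = {}"
    using isolated \<open>0 < s\<close> \<open>t < r\<close> by (fastforce simp: C_def)
  ultimately have "{a \<in> \<rho> E. f a \<in> C} \<in> I"
    by (intro preimage_in_I_if_no_cluster_points[OF E]) (auto simp: C_def)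
  moreover have "{a \<in> \<rho> E. dist (f a) y < t} - {a \<in> \<rho> E. dist (f a) y < s} \<subseteq> {a \<in> \<rho> E. f a \<in> C}"
    using f_in_01[OF E] by (auto simp: C_def dist_commute)
  ultimately show ?thesis
    by (rule I_mono)
qed

lemma rho_converges_to_isolated_cluster_point:
  assumes PM: "P_minus \<Lambda> \<Omega> FF \<rho>" and E: "E \<in> FF" and y: "y \<in> rho_cluster_points E"
    and "r > 0" and isolated: "rho_cluster_points E \<inter> ball y r \<subseteq> {y}"
  obtains H where "H \<in> FF" "rho_converges \<Omega> \<rho> (top_of_set {0..1}) f H y"
proof -
  define A where "A n = {a \<in> \<rho> E. dist (f a) y < r / (real n + 2)}" for n :: nat
  have "A 0 \<subseteq> \<Lambda>"
    using rho_subset[OF E] by (auto simp: A_def)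
  moreover have "A (Suc n) \<subseteq> A n" for n
  proof -
    have "r / (real (Suc n) + 2) \<le> r / (real n + 2)"
      using \<open>r > 0\<close> by (intro divide_left_mono) auto
    then show ?thesis
      by (auto simp: A_def)
  qed
  moreover have "A 0 \<notin> I"
    using rho_cluster_pointsD[OF y, of "r / 2"] \<open>r > 0\<close> by (simp add: A_def)
  moreover have "A n - A (Suc n) \<in> I" for n
    unfolding A_def using \<open>r > 0\<close>
    by (intro ball_preimage_Diff_in_I[OF E isolated]) (simp_all add: divide_less_eq)
  ultimately obtain H where H: "H \<in> FF" "\<And>n. \<exists>K. finite K \<and> K \<subseteq> \<Omega> \<and> \<rho> (H - K) \<subseteq> A n"
    using PM unfolding P_minus_def by meson
  have "y \<in> {0..1}"
    using y rho_cluster_points_subset by blast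
  have "rho_converges \<Omega> \<rho> (top_of_set {0..1}) f H y"
    unfolding rho_converges_top_of_set_iff[OF \<open>y \<in> {0..1}\<close>]
  proof (intro allI impI)
    fix \<epsilon> :: real
    assume "\<epsilon> > 0"
    then obtain n :: nat where "r / \<epsilon> < real n"
      using reals_Archimedean2 by blast
    then have "r / (real n + 2) < \<epsilon>"
      using \<open>\<epsilon> > 0\<close> \<open>r > 0\<close> by (simp add: field_simps)
    then have "f ` A n \<subseteq> {0..1} \<inter> ball y \<epsilon>"
      using f_in_01[OF E] by (auto simp: A_def dist_commute)
    then show "\<exists>K. finite K \<and> K \<subseteq> \<Omega> \<and> f ` \<rho> (H - K) \<subseteq> {0..1} \<inter> ball y \<epsilon>"
      using H(2)[of n] by (meson image_mono order_trans)
  qed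
  then show ?thesis
    using H(1) that by blast
qed

lemma rho_cluster_points_infinite:
  assumes PM: "P_minus \<Lambda> \<Omega> FF \<rho>" and E: "E \<in> FF"
    and diverges: "\<And>H x. H \<in> FF \<Longrightarrow> x \<in> {0..1} \<Longrightarrow> \<not> rho_converges \<Omega> \<rho> (top_of_set {0..1}) f H x"
  shows "infinite (rho_cluster_points E)"
proof
  assume fin: "finite (rho_cluster_points E)"
  obtain y where y: "y \<in> rho_cluster_points E"
    using rho_cluster_points_nonempty[OF E] by blast
  obtain \<delta> where "\<delta> > 0" "\<forall>x\<in>rho_cluster_points E. x \<noteq> y \<longrightarrow> \<delta> \<le> dist y x"
    using finite_set_avoid[OF fin, of y] by blast
  then have "rho_cluster_points E \<inter> ball y \<delta> \<subseteq> {y}"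
    by force
  moreover have "y \<in> {0..1}"
    using y rho_cluster_points_subset by blast
  ultimately show False
    using rho_converges_to_isolated_cluster_point[OF PM E y \<open>\<delta> > 0\<close>] diverges by blast
qed

lemma near_cluster_point_in_rho_image:
  assumes F: "F \<in> FF" and y: "y \<in> rho_cluster_points F" and "\<delta> > 0" and "finite K"
    and accretion: "\<rho> F - \<rho> (F - K) \<in> I"
    and g_inj: "inj_on g \<Lambda>" and g_approx: "\<And>\<delta>. \<delta> > 0 \<Longrightarrow> finite {a \<in> \<Lambda>. \<delta> \<le> \<bar>g a - f a\<bar>}"
  shows "\<exists>a\<in>\<rho> (F - K). g a \<noteq> y \<and> dist (g a) y < \<delta>"
proof -
  have "\<delta> / 2 > 0"
    using \<open>\<delta> > 0\<close> by simp
  define S where "S = {a \<in> \<rho> F. dist (f a) y < \<delta> / 2}"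
  have "S \<notin> I"
    unfolding S_def using y \<open>\<delta> / 2 > 0\<close> by (rule rho_cluster_pointsD)
  have "{a \<in> \<Lambda>. \<delta> / 2 \<le> \<bar>g a - f a\<bar>} \<in> I"
    using g_approx[OF \<open>\<delta> / 2 > 0\<close>] by (intro I_finite) auto
  moreover have "g -` {y} \<inter> \<Lambda> \<in> I"
    using g_inj by (intro I_finite finite_vimage_IntI) auto
  ultimately have "(\<rho> F - \<rho> (F - K)) \<union> {a \<in> \<Lambda>. \<delta> / 2 \<le> \<bar>g a - f a\<bar>} \<union> (g -` {y} \<inter> \<Lambda>) \<in> I"
    using accretion by (intro I_Un)
  then have "\<not> S \<subseteq> (\<rho> F - \<rho> (F - K)) \<union> {a \<in> \<Lambda>. \<delta> / 2 \<le> \<bar>g a - f a\<bar>} \<union> (g -` {y} \<inter> \<Lambda>)"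
    using \<open>S \<notin> I\<close> I_mono by blast
  then obtain a where "a \<in> S" "a \<notin> \<rho> F - \<rho> (F - K)" "a \<notin> {a \<in> \<Lambda>. \<delta> / 2 \<le> \<bar>g a - f a\<bar>}"
    "a \<notin> g -` {y} \<inter> \<Lambda>"
    by blast
  moreover have "a \<in> \<rho> F" "a \<in> \<Lambda>"
    using \<open>a \<in> S\<close> rho_subset[OF F] by (auto simp: S_def)
  ultimately have a: "a \<in> \<rho> (F - K)" "g a \<noteq> y" "\<bar>g a - f a\<bar> < \<delta> / 2" "dist (f a) y < \<delta> / 2"
    by (auto simp: S_def)
  then have "dist (g a) y < \<delta>"
    using dist_triangle[of "g a" y "f a"] by (simp add: dist_real_def)
  then show ?thesis
    using a by blast
qed

text \<open>The witness is a set of points approaching infinitely many distinct cluster points, each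
  chosen inside a \<rho>-image that shrinks as the point gets closer to its cluster point.\<close>

lemma katetov_conv_witness:
  fixes g :: "'l \<Rightarrow> real" and L :: "nat \<Rightarrow> 'o set"
  assumes F: "F \<in> FF" and accretions: "\<And>K. finite K \<Longrightarrow> K \<subseteq> \<Omega> \<Longrightarrow> \<rho> F - \<rho> (F - K) \<in> I"
    and infinite_clusters: "infinite (rho_cluster_points F)"
    and g: "g \<in> \<Lambda> \<rightarrow> Q01" "inj_on g \<Lambda>" "\<And>\<delta>. \<delta> > 0 \<Longrightarrow> finite {a \<in> \<Lambda>. \<delta> \<le> \<bar>g a - f a\<bar>}"
    and L: "\<And>n. finite (L n)" "\<And>n. L n \<subseteq> \<Omega>" "mono L"
  obtains B where "B \<in> conv_plus" "\<And>n. finite (B - g ` \<rho> (F - L n))"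
proof -
  obtain y :: "nat \<Rightarrow> real" where y: "inj y" "range y \<subseteq> rho_cluster_points F"
    using infinite_countable_subset[OF infinite_clusters] by blast
  have "\<exists>q. q \<in> g ` \<rho> (F - L (max k j)) \<and> q \<noteq> y k \<and> dist q (y k) < 1 / Suc j" for k j
  proof -
    have "\<exists>a\<in>\<rho> (F - L (max k j)). g a \<noteq> y k \<and> dist (g a) (y k) < 1 / Suc j"
      using y(2) by (intro near_cluster_point_in_rho_image F L(1) accretions L(2) g(2,3)) auto
    then show ?thesis
      by blast
  qed
  then obtain b where b: "\<And>k j. b k j \<in> g ` \<rho> (F - L (max k j))"
    "\<And>k j. b k j \<noteq> y k" "\<And>k j. dist (b k j) (y k) < 1 / Suc j"
    by metis
  define B where "B = (\<lambda>(k, j). b k j) ` UNIV"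
  have "b k j \<in> g ` \<Lambda>" for k j
    using b(1)[of k j] rho_Diff_subset[OF F L(1)] by blast
  then have "B \<subseteq> Q01"
    using funcset_image[OF g(1)] by (auto simp: B_def)
  have "B \<notin> conv_ideal"
    unfolding B_def using y(1) b(2,3) by (rule not_in_conv_ideal_if_approaching)
  then have "B \<in> conv_plus"
    using \<open>B \<subseteq> Q01\<close> by (simp add: conv_plus_def)
  moreover have "finite (B - g ` \<rho> (F - L n))" for n
  proof -
    have "b k j \<in> g ` \<rho> (F - L n)" if "n \<le> max k j" for k j
      using b(1)[of k j] rho_Diff_mono[OF F F subset_refl L(1) monoD[OF L(3) that]] by blast
    then have "B - g ` \<rho> (F - L n) \<subseteq> (\<lambda>(k, j). b k j) ` ({..<n} \<times> {..<n})"
      by (force simp: B_def not_le)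
    then show ?thesis
      by (rule finite_subset) simp
  qed
  ultimately show ?thesis
    using that by blast
qed

lemma katetov_conv_if_rho_cluster_points_infinite:
  assumes small: "small_accretions \<Lambda> \<Omega> FF \<rho>"
    and infinite_clusters: "\<And>E. E \<in> FF \<Longrightarrow> infinite (rho_cluster_points E)"
  shows "katetov_le Q01 Q01 conv_plus rho_conv \<Lambda> \<Omega> FF \<rho>"
proof -
  obtain g where g: "g \<in> \<Lambda> \<rightarrow> Q01" "inj_on g \<Lambda>" "\<And>\<delta>. \<delta> > 0 \<Longrightarrow> finite {a \<in> \<Lambda>. \<delta> \<le> \<bar>g a - f a\<bar>}"
    using injective_rational_approximation[OF countable_Lambda f_01] by blast
  obtain L :: "nat \<Rightarrow> 'o set" where L: "\<And>n. finite (L n)" "\<And>n. L n \<subseteq> \<Omega>" "mono L"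
    "\<And>K. finite K \<Longrightarrow> K \<subseteq> \<Omega> \<Longrightarrow> \<exists>n. K \<subseteq> L n"
    using countable_finite_exhaustion[OF countable_Omega] by blast
  have "\<exists>B\<in>conv_plus. \<forall>K1. finite K1 \<and> K1 \<subseteq> \<Omega> \<longrightarrow>
      (\<exists>K2. finite K2 \<and> K2 \<subseteq> Q01 \<and> rho_conv (B - K2) \<subseteq> g ` \<rho> (F1 - K1))" if F1: "F1 \<in> FF" for F1
  proof -
    obtain F where F: "F \<in> FF" "F \<subseteq> F1"
      and accretions: "\<And>K. finite K \<Longrightarrow> K \<subseteq> \<Omega> \<Longrightarrow> \<rho> F - \<rho> (F - K) \<in> I"
      using small F1 unfolding small_accretions_def by meson
    obtain B where B: "B \<in> conv_plus" "\<And>n. finite (B - g ` \<rho> (F - L n))"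
      using katetov_conv_witness[OF F(1) accretions infinite_clusters[OF F(1)] g L(1-3)] by metis
    have "\<exists>K2. finite K2 \<and> K2 \<subseteq> Q01 \<and> rho_conv (B - K2) \<subseteq> g ` \<rho> (F1 - K1)"
      if K1: "finite K1" "K1 \<subseteq> \<Omega>" for K1
    proof -
      obtain n where "K1 \<subseteq> L n"
        using L(4)[OF K1] by blast
      then have "g ` \<rho> (F - L n) \<subseteq> g ` \<rho> (F1 - K1)"
        by (intro image_mono rho_Diff_mono F F1 L(1))
      moreover have "B - g ` \<rho> (F - L n) \<subseteq> Q01"
        using B(1) by (auto simp: conv_plus_def)
      ultimately show ?thesis
        using B(2)[of n] unfolding rho_conv_def by (intro exI[of _ "B - g ` \<rho> (F - L n)"]) auto
    qed
    then show ?thesis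
      using B(1) by blast
  qed
  then show ?thesis
    unfolding katetov_le_def using g(1) by blast
qed

end

context partition_regular_fun
begin

lemma not_katetov_conv_imp_FinBW_01:
  assumes PM: "P_minus \<Lambda> \<Omega> FF \<rho>" and small: "small_accretions \<Lambda> \<Omega> FF \<rho>"
    and not_katetov: "\<not> katetov_le Q01 Q01 conv_plus rho_conv \<Lambda> \<Omega> FF \<rho>"
  shows "FinBW \<Lambda> \<Omega> FF \<rho> (top_of_set {0..1::real})"
proof (rule ccontr)
  assume "\<not> FinBW \<Lambda> \<Omega> FF \<rho> (top_of_set {0..1::real})"
  moreover have "Hausdorff_space (top_of_set {0..1::real})"
    by (simp add: Hausdorff_space_subtopology)
  ultimately obtain f where f: "f \<in> \<Lambda> \<rightarrow> {0..1::real}"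
    and diverges: "\<And>H x. H \<in> FF \<Longrightarrow> x \<in> {0..1} \<Longrightarrow> \<not> rho_converges \<Omega> \<rho> (top_of_set {0..1}) f H x"
    unfolding FinBW_def by auto
  interpret prf_map_01 \<Lambda> \<Omega> FF \<rho> f
    by unfold_locales (fact f)
  have "katetov_le Q01 Q01 conv_plus rho_conv \<Lambda> \<Omega> FF \<rho>"
    using katetov_conv_if_rho_cluster_points_infinite[OF small rho_cluster_points_infinite[OF PM _ diverges]] .
  with not_katetov show False ..
qed

end

lemma FinBW_metric_compact_imp_FinBW_01:
  assumes "FinBW_metric_compact \<Lambda> \<Omega> FF \<rho> TYPE(real)"
  shows "FinBW \<Lambda> \<Omega> FF \<rho> (top_of_set {0..1::real})"
proof -
  have "mtopology_of (submetric euclidean_metric {0..1::real}) = top_of_set {0..1}"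
    by (simp add: mtopology_of_submetric)
  moreover have "compact_space (top_of_set {0..1::real})"
    by (simp add: compact_space_subtopology)
  ultimately show ?thesis
    using assms unfolding FinBW_metric_compact_def by metis
qed

theorem theorem6p2:
  fixes \<Lambda> :: "'l set" and \<Omega> :: "'o set" and FF :: "'o set set" and \<rho> :: "'o set \<Rightarrow> 'l set"
  assumes hprf: "partition_regular \<Lambda> \<Omega> FF \<rho>"
    and hsa: "small_accretions \<Lambda> \<Omega> FF \<rho>"
  shows
    "(FinBW \<Lambda> \<Omega> FF \<rho> (top_of_set {0..1::real}) \<longrightarrow> FinBW_metric_compact \<Lambda> \<Omega> FF \<rho> TYPE('a))
     \<and> (FinBW_metric_compact \<Lambda> \<Omega> FF \<rho> TYPE(real) \<longrightarrow> FinBW \<Lambda> \<Omega> FF \<rho> (top_of_set {0..1::real}))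
     \<and> (FinBW_metric_compact \<Lambda> \<Omega> FF \<rho> TYPE(real) \<longrightarrow> \<not> katetov_le Q01 Q01 conv_plus rho_conv \<Lambda> \<Omega> FF \<rho>)
     \<and> (FinBW \<Lambda> \<Omega> FF \<rho> (top_of_set {0..1::real}) \<longrightarrow> \<not> katetov_le Q01 Q01 conv_plus rho_conv \<Lambda> \<Omega> FF \<rho>)
     \<and> (P_minus \<Lambda> \<Omega> FF \<rho> \<longrightarrow> \<not> katetov_le Q01 Q01 conv_plus rho_conv \<Lambda> \<Omega> FF \<rho>
          \<longrightarrow> FinBW \<Lambda> \<Omega> FF \<rho> (top_of_set {0..1::real}) \<and> FinBW_metric_compact \<Lambda> \<Omega> FF \<rho> TYPE('a))"
proof -
  interpret partition_regular_fun \<Lambda> \<Omega> FF \<rho>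
    by unfold_locales (fact hprf)
  have FinBW_01_imp_metric_compact:
    "FinBW \<Lambda> \<Omega> FF \<rho> (top_of_set {0..1::real}) \<Longrightarrow> FinBW_metric_compact \<Lambda> \<Omega> FF \<rho> TYPE('a)"
    unfolding FinBW_metric_compact_def using FinBW_imp_compact_space FinBW_if_compact_space by blast
  show ?thesis
    using FinBW_01_imp_metric_compact FinBW_metric_compact_imp_FinBW_01 FinBW_01_imp_not_katetov_conv
      not_katetov_conv_imp_FinBW_01[OF _ hsa] by blast
qed

end
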